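(* Let $\alpha\in\{0,1,2\}^*$ (leading zeros allowed), $x=[\![\alpha]\!]_3$, and $\gamma=\mathrm{enc}(\alpha)=\gamma_{n-1}\cdots\gamma_0$. Run the $x/2$ FST from initial state $0$ on the input sequence $\gamma_{n-1},\gamma_{n-2},\dots,\gamma_0$ (most significant symbol first), and let $\gamma'_{n-1},\dots,\gamma'_0$ be the output symbols in the order produced. Then $[\![\gamma'_{n-1}\cdots\gamma'_0]\!]_{3'}=\lfloor x/2\rfloor$, and the state of the FST after reading all of $\gamma$ equals $x\bmod 2$.
   Context: Strings are indexed from the right; $[\![\alpha]\!]_3=\sum_i\alpha_i3^i$. Base $3'$: words over $\{0,\bar0,1,\bar1\}$ with trit values $0\mapsto0,\bar0\mapsto1,1\mapsto1,\bar1\mapsto2$ and $[\![\gamma]\!]_{3'}=\sum_i\mathrm{val}(\gamma_i)3^i$. The encoding $\mathrm{enc}:\{0,1,2\}^*\to\{0,\bar0,1,\bar1\}^*$ acts symbol by symbol: $0\mapsto0$, $2\mapsto\bar1$, and a digit $\alpha_i=1$ maps to $1$ if there exists $j<i$ with $\alpha_j\ne1$ and the largest such $j$ has $\alpha_j=2$, and to $\bar0$ otherwise. A transition $(q,a,b,q')$ means: in state $q$, reading $a$, write $b$ and move to $q'$. The $x/2$ FST has states $\{0,1\}$, alphabet $\{0,\bar0,1,\bar1\}$, and transitions: $(0,0,0,0)$, $(0,\bar0,0,1)$, $(0,1,0,1)$, $(0,\bar1,\bar0,0)$, $(1,0,1,1)$, $(1,\bar0,\bar1,0)$, $(1,1,\bar1,0)$,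 $(1,\bar1,\bar1,1)$. (Equivalently, identifying $0,\bar0,1,\bar1$ with pairs $(0,0),(0,1),(1,0),(1,1)$: from state $s_1$ reading $(s_0,c_0)$ it writes $(s_1,[s_0+c_0+s_1\ge2])$ and moves to $(s_0+c_0+s_1)\bmod 2$.) *)

theory Defs
  imports Main
begin

text \<open>Words are lists indexed from the right: list position i holds the symbol of weight 3^i
  (i.e. the list stores the least significant symbol first).\<close>

datatype sym = S0 | S0b | S1 | S1b  (* 0, bar 0, 1, bar 1 *)

fun val :: "sym \<Rightarrow> nat" where
  "val S0 = 0" | "val S0b = 1" | "val S1 = 1" | "val S1b = 2"

definition val3 :: "nat list \<Rightarrow> nat" where
  "val3 \<alpha> = (\<Sum>i<length \<alpha>. \<alpha> ! i * 3 ^ i)"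

definition val3' :: "sym list \<Rightarrow> nat" where
  "val3' \<gamma> = (\<Sum>i<length \<gamma>. val (\<gamma> ! i) * 3 ^ i)"

definition enc_digit :: "nat list \<Rightarrow> nat \<Rightarrow> sym" where
  "enc_digit \<alpha> i =
     (if \<alpha> ! i = 0 then S0
      else if \<alpha> ! i = 2 then S1b
      else if (\<exists>j<i. \<alpha> ! j \<noteq> 1) \<and> \<alpha> ! (GREATEST j. j < i \<and> \<alpha> ! j \<noteq> 1) = 2 then S1
      else S0b)"

definition enc :: "nat list \<Rightarrow> sym list" where
  "enc \<alpha> = map (enc_digit \<alpha>) [0..<length \<alpha>]"

fun delta :: "nat \<Rightarrow> sym \<Rightarrow> sym \<times> nat" where
  "delta 0 S0 = (S0, 0)"
| "delta 0 S0b = (S0, 1)"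
| "delta 0 S1 = (S0, 1)"
| "delta 0 S1b = (S0b, 0)"
| "delta (Suc _) S0 = (S1, 1)"
| "delta (Suc _) S0b = (S1b, 0)"
| "delta (Suc _) S1 = (S1b, 0)"
| "delta (Suc _) S1b = (S1b, 1)"

fun run :: "nat \<Rightarrow> sym list \<Rightarrow> sym list \<times> nat" where
  "run q [] = ([], q)"
| "run q (a # as) = (let (b, q') = delta q a; (bs, qf) = run q' as in (b # bs, qf))"

end

theory Submission
  imports Defs
begin

text \<open>Both symbols 1 and \<open>\<bar>0\<close> carry the trit value 1, so \<open>enc\<close> preserves the value of the
  word and the choice between them plays no role here. The transducer performs schoolbook
  long division by 2 from the most significant symbol on: with remainder q in the state,
  reading a symbol of value v emits the quotient digit of 3q + v and keeps its remainder.\<close>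

lemma val3'_append_single: "val3' (xs @ [a]) = val3' xs + val a * 3 ^ length xs"
  unfolding val3'_def by (simp add: nth_append)

lemma val_enc_digit: "\<alpha> ! i < 3 \<Longrightarrow> val (enc_digit \<alpha> i) = \<alpha> ! i"
  unfolding enc_digit_def by (auto simp: numeral_3_eq_3 less_Suc_eq)

lemma val3'_enc:
  assumes "\<forall>d \<in> set \<alpha>. d < 3"
  shows "val3' (enc \<alpha>) = val3 \<alpha>"
  unfolding enc_def val3'_def val3_def
  by (rule sum.cong) (auto simp: val_enc_digit assms)

lemma delta_divides_by_two:
  assumes "q < 2" and "delta q a = (b, q')"
  shows "3 * q + val a = 2 * val b + q' \<and> q' < 2"
  using assms by (cases a; cases q) (auto simp: numeral_2_eq_2 less_Suc_eq)

lemma length_fst_run: "length (fst (run q ws)) = length ws"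
  by (induction ws arbitrary: q) (auto split: prod.splits, metis fst_conv)

lemma run_divides_by_two:
  assumes "q < 2"
  shows "2 * val3' (rev (fst (run q ws))) + snd (run q ws) = q * 3 ^ length ws + val3' (rev ws)
       \<and> snd (run q ws) < 2"
  using assms
proof (induction ws arbitrary: q)
  case Nil
  then show ?case by (simp add: val3'_def)
next
  case (Cons a as)
  obtain b q' where step: "delta q a = (b, q')"
    by (cases "delta q a")
  with Cons.prems have digit: "3 * q + val a = 2 * val b + q'" and "q' < 2"
    using delta_divides_by_two by blast+
  obtain bs qf where rest: "run q' as = (bs, qf)"
    by (cases "run q' as")
  have IH: "2 * val3' (rev bs) + qf = q' * 3 ^ length as + val3' (rev as)" and "qf < 2"
    using Cons.IH[OF \<open>q' < 2\<close>] rest by auto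
  have "length bs = length as"
    using length_fst_run[of q' as] rest by simp
  then have "2 * val3' (rev (b # bs)) + qf = (2 * val b + q') * 3 ^ length as + val3' (rev as)"
    using IH by (simp add: val3'_append_single algebra_simps)
  also have "\<dots> = q * 3 ^ length (a # as) + val3' (rev (a # as))"
    by (simp only: digit[symmetric]) (simp add: val3'_append_single algebra_simps)
  finally show ?case
    using step rest \<open>qf < 2\<close> by simp
qed

theorem mainTheorem9:
  fixes \<alpha> :: "nat list"
  assumes "\<forall>d \<in> set \<alpha>. d < 3"
  shows "val3' (rev (fst (run 0 (rev (enc \<alpha>))))) = val3 \<alpha> div 2
       \<and> snd (run 0 (rev (enc \<alpha>))) = val3 \<alpha> mod 2"
proof -
  let ?r = "run 0 (rev (enc \<alpha>))"
  have sum: "val3 \<alpha> = snd ?r + 2 * val3' (rev (fst ?r))" and "snd ?r < 2"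
    using run_divides_by_two[of 0 "rev (enc \<alpha>)"] val3'_enc[OF assms] by simp_all
  then show ?thesis
    by (simp add: sum)
qed

end
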